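(* Let $\kappa$ be an uncountable cardinal with $\kappa=\kappa^{<\kappa}$. Then there is a continuous injective function $f:{}^\kappa\kappa\to{}^\kappa\kappa$ whose range is not a $\kappa$-Borel subset of ${}^\kappa\kappa$.
   Context: ${}^\kappa\kappa$ is the set of functions $\kappa\to\kappa$, with the topology whose basic open sets are $N_s=\{x\in{}^\kappa\kappa : s\subseteq x\}$ for $s$ a function from some ordinal $\alpha<\kappa$ to $\kappa$. A subset of ${}^\kappa\kappa$ is $\kappa$-Borel if it belongs to the smallest algebra of subsets of ${}^\kappa\kappa$ that contains all open sets and is closed under unions of $\kappa$ many sets (and complements). *)

theory Defs
  imports Main "HOL-Library.Countable_Set"
begin

(* The cardinal kappa is represented by a type 'k carrying a cardinal order r
   (card_order r: a well-order on UNIV that is minimal among well-orders of UNIV).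
   Ordinals alpha < kappa are identified with elements alpha of 'k, the ordinal alpha
   being the initial segment underS r alpha. ^kappa kappa is the type 'k => 'k. *)

(* basic open set N_s for s : alpha -> kappa (s given by its values on underS r alpha) *)
definition basic_nbhd :: "'k rel \<Rightarrow> 'k \<Rightarrow> ('k \<Rightarrow> 'k) \<Rightarrow> ('k \<Rightarrow> 'k) set" where
  "basic_nbhd r \<alpha> s = {x. \<forall>\<beta>\<in>underS r \<alpha>. x \<beta> = s \<beta>}"

definition kk_open :: "'k rel \<Rightarrow> ('k \<Rightarrow> 'k) set \<Rightarrow> bool" where
  "kk_open r U \<longleftrightarrow> (\<forall>x\<in>U. \<exists>\<alpha> s. x \<in> basic_nbhd r \<alpha> s \<and> basic_nbhd r \<alpha> s \<subseteq> U)"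

definition kk_continuous :: "'k rel \<Rightarrow> (('k \<Rightarrow> 'k) \<Rightarrow> ('k \<Rightarrow> 'k)) \<Rightarrow> bool" where
  "kk_continuous r f \<longleftrightarrow> (\<forall>U. kk_open r U \<longrightarrow> kk_open r (f -` U))"

inductive_set kappa_borel :: "'k rel \<Rightarrow> ('k \<Rightarrow> 'k) set set" for r :: "'k rel" where
  kb_open: "kk_open r U \<Longrightarrow> U \<in> kappa_borel r"
| kb_compl: "U \<in> kappa_borel r \<Longrightarrow> - U \<in> kappa_borel r"
| kb_union: "(\<forall>U\<in>F. U \<in> kappa_borel r) \<Longrightarrow> ordLeq3 (card_of F) r \<Longrightarrow> \<Union>F \<in> kappa_borel r"

end

(* Every kappa-Borel set B has the kappa-Baire property: there are an open U and kappa many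
   open dense sets with intersection C such that B and U agree on C.
   The injection emb writes y in consecutive blocks. Block j starts at block_start y j, which is
   continuous and increasing in j; it carries a marker z0, then the code of y restricted to j
   (one element of kappa, as kappa^<kappa = kappa), and then a copy of the sequence of length
   < kappa coded by y j. Two images have common block starts beyond any given point, and the
   codes found there give injectivity; the markers found there show that exchanging z0 and z1
   from some point on never maps a point of range emb into range emb. Since the sequences coded
   by y j are arbitrary, range emb meets every intersection of kappa open dense sets inside every
   basic open set. So if range emb agreed with U on C, then U = {} is impossible, and a point of
   range emb inside a basic subset of U and generic also for the flipped dense sets flips to a
   point of U inside C, i.e. of range emb. *)

theory Submission
  imports Defs "HOL-Combinatorics.Transposition" "HOL-Library.FuncSet"
begin

section \<open>Open and dense sets\<close>

definition kk_dense :: "'k rel \<Rightarrow> ('k \<Rightarrow> 'k) set \<Rightarrow> bool" where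
  "kk_dense r D \<longleftrightarrow> (\<forall>\<alpha> s. D \<inter> basic_nbhd r \<alpha> s \<noteq> {})"

definition kk_baire :: "'k rel \<Rightarrow> ('k \<Rightarrow> 'k) set \<Rightarrow> bool" where
  "kk_baire r B \<longleftrightarrow> (\<exists>U F. kk_open r U \<and> ordLeq3 (card_of F) r \<and>
     (\<forall>D\<in>F. kk_open r D \<and> kk_dense r D) \<and> B \<inter> \<Inter>F = U \<inter> \<Inter>F)"

definition coordwise :: "('k \<Rightarrow> 'a \<Rightarrow> 'b) \<Rightarrow> ('k \<Rightarrow> 'a) \<Rightarrow> 'k \<Rightarrow> 'b" where
  "coordwise \<sigma> x = (\<lambda>b. \<sigma> b (x b))"

lemma basic_nbhd_self [simp]: "s \<in> basic_nbhd r \<alpha> s"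
  by (simp add: basic_nbhd_def)

lemma kk_openI:
  "(\<And>x. x \<in> U \<Longrightarrow> \<exists>\<alpha> s. x \<in> basic_nbhd r \<alpha> s \<and> basic_nbhd r \<alpha> s \<subseteq> U) \<Longrightarrow> kk_open r U"
  by (simp add: kk_open_def)

lemma kk_open_UN:
  assumes "\<And>i. i \<in> I \<Longrightarrow> kk_open r (U i)"
  shows "kk_open r (\<Union>i\<in>I. U i)"
proof (rule kk_openI)
  fix x assume "x \<in> (\<Union>i\<in>I. U i)"
  then obtain i where "i \<in> I" "x \<in> U i"
    by blast
  then obtain \<alpha> s where "x \<in> basic_nbhd r \<alpha> s" "basic_nbhd r \<alpha> s \<subseteq> U i"
    using assms unfolding kk_open_def by blast
  then show "\<exists>\<alpha> s. x \<in> basic_nbhd r \<alpha> s \<and> basic_nbhd r \<alpha> s \<subseteq> (\<Union>i\<in>I. U i)"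
    using \<open>i \<in> I\<close> by (intro exI[of _ \<alpha>] exI[of _ s]) blast
qed

lemma basic_nbhd_eq: "x \<in> basic_nbhd r \<alpha> s \<Longrightarrow> basic_nbhd r \<alpha> x = basic_nbhd r \<alpha> s"
  by (auto simp: basic_nbhd_def)

lemma kk_open_basic_nbhd: "kk_open r (basic_nbhd r \<alpha> s)"
proof (rule kk_openI)
  fix x assume "x \<in> basic_nbhd r \<alpha> s"
  then show "\<exists>\<alpha>' s'. x \<in> basic_nbhd r \<alpha>' s' \<and> basic_nbhd r \<alpha>' s' \<subseteq> basic_nbhd r \<alpha> s"
    by (intro exI[of _ \<alpha>] exI[of _ x]) (simp add: basic_nbhd_eq)
qed

lemma kk_open_Un:
  assumes "kk_open r U" "kk_open r V"
  shows "kk_open r (U \<union> V)"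
proof -
  have "kk_open r (\<Union>i\<in>{U, V}. i)"
    by (rule kk_open_UN) (use assms in auto)
  then show ?thesis
    by simp
qed

lemma kk_open_exterior: "\<exists>V. kk_open r V \<and> U \<inter> V = {} \<and> kk_dense r (U \<union> V)"
proof -
  define V where "V = (\<Union>p\<in>{p. basic_nbhd r (fst p) (snd p) \<inter> U = {}}. basic_nbhd r (fst p) (snd p))"
  have "kk_open r V"
    unfolding V_def by (rule kk_open_UN) (rule kk_open_basic_nbhd)
  moreover have "U \<inter> V = {}"
    unfolding V_def by auto
  moreover have "kk_dense r (U \<union> V)"
    unfolding kk_dense_def
  proof (intro allI)
    fix \<alpha> s
    show "(U \<union> V) \<inter> basic_nbhd r \<alpha> s \<noteq> {}"
    proof (cases "basic_nbhd r \<alpha> s \<inter> U = {}")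
      case True
      then have "s \<in> V"
        unfolding V_def by (intro UN_I[of "(\<alpha>, s)"]) simp_all
      then show ?thesis
        by (metis IntI UnI2 basic_nbhd_self empty_iff)
    qed auto
  qed
  ultimately show ?thesis
    by blast
qed

lemma kk_open_UNIV: "kk_open r UNIV"
  unfolding kk_open_def by (metis basic_nbhd_self subset_UNIV)

lemma kk_dense_UNIV: "kk_dense r UNIV"
  unfolding kk_dense_def by (metis basic_nbhd_self IntI UNIV_I empty_iff)

lemma kk_open_vimage_coordwise:
  assumes "kk_open r D"
  shows "kk_open r (coordwise \<sigma> -` D)"
proof (rule kk_openI)
  fix x assume "x \<in> coordwise \<sigma> -` D"
  then obtain \<alpha> p where \<alpha>p: "coordwise \<sigma> x \<in> basic_nbhd r \<alpha> p" "basic_nbhd r \<alpha> p \<subseteq> D"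
    using assms unfolding kk_open_def by blast
  have "basic_nbhd r \<alpha> x \<subseteq> coordwise \<sigma> -` D"
  proof
    fix z assume "z \<in> basic_nbhd r \<alpha> x"
    then have "coordwise \<sigma> z \<in> basic_nbhd r \<alpha> p"
      using \<alpha>p(1) by (simp add: basic_nbhd_def coordwise_def)
    then show "z \<in> coordwise \<sigma> -` D"
      using \<alpha>p(2) by auto
  qed
  then show "\<exists>\<alpha> s. x \<in> basic_nbhd r \<alpha> s \<and> basic_nbhd r \<alpha> s \<subseteq> coordwise \<sigma> -` D"
    by (intro exI[of _ \<alpha>] exI[of _ x]) simp
qed

lemma kk_dense_vimage_coordwise:
  assumes surj: "\<And>b. surj (\<sigma> b)" and "kk_dense r D"
  shows "kk_dense r (coordwise \<sigma> -` D)"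
  unfolding kk_dense_def
proof (intro allI)
  fix \<alpha> s
  obtain z where z: "z \<in> D" "z \<in> basic_nbhd r \<alpha> (coordwise \<sigma> s)"
    using \<open>kk_dense r D\<close> unfolding kk_dense_def by blast
  define x where "x b = (if b \<in> underS r \<alpha> then s b else inv (\<sigma> b) (z b))" for b
  have "coordwise \<sigma> x = z"
    using z(2) surj by (auto simp: coordwise_def x_def basic_nbhd_def surj_f_inv_f)
  moreover have "x \<in> basic_nbhd r \<alpha> s"
    by (simp add: basic_nbhd_def x_def)
  ultimately show "coordwise \<sigma> -` D \<inter> basic_nbhd r \<alpha> s \<noteq> {}"
    using z(1) by blast
qed

lemma coordwise_in_basic_nbhd:
  "(\<And>b. b \<in> underS r \<alpha> \<Longrightarrow> \<sigma> b = id) \<Longrightarrow> x \<in> basic_nbhd r \<alpha> s \<Longrightarrow>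
    coordwise \<sigma> x \<in> basic_nbhd r \<alpha> s"
  by (simp add: basic_nbhd_def coordwise_def)

section \<open>Ordinals below \<open>\<kappa>\<close>\<close>

locale kappa_order =
  fixes r :: "'k rel"
  assumes card_order: "card_order r"
    and uncountable: "\<not> countable (UNIV :: 'k set)"
begin

lemma Card_order: "Card_order r" and Field_r [simp]: "Field r = UNIV"
  using card_order_on_Card_order[OF card_order] by auto

end

sublocale kappa_order \<subseteq> wo_rel r
  unfolding wo_rel_def using Card_order by (simp add: card_order_on_def)

context kappa_order
begin

lemma le_refl [simp]: "(a, a) \<in> r"
  using REFL by (simp add: refl_on_def)

lemma le_trans: "(a, b) \<in> r \<Longrightarrow> (b, c) \<in> r \<Longrightarrow> (a, c) \<in> r"
  using TRANS by (blast elim: transE)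

lemma le_antisym: "(a, b) \<in> r \<Longrightarrow> (b, a) \<in> r \<Longrightarrow> a = b"
  using ANTISYM by (blast dest: antisymD)

lemma le_total: "(a, b) \<in> r \<or> (b, a) \<in> r"
  using TOTALS by simp

lemma in_underS_iff [simp]: "a \<in> underS b \<longleftrightarrow> a \<noteq> b \<and> (a, b) \<in> r"
  by (simp add: underS_def)

lemma not_le_iff_less: "(a, b) \<notin> r \<longleftrightarrow> b \<in> underS a"
  using le_total le_antisym by auto

lemma less_le_trans: "a \<in> underS b \<Longrightarrow> (b, c) \<in> r \<Longrightarrow> a \<in> underS c"
  using le_trans le_antisym by auto

lemma le_less_trans: "(a, b) \<in> r \<Longrightarrow> b \<in> underS c \<Longrightarrow> a \<in> underS c"
  using le_trans le_antisym by auto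

lemma less_trans: "a \<in> underS b \<Longrightarrow> b \<in> underS c \<Longrightarrow> a \<in> underS c"
  using le_trans le_antisym by auto

lemma less_asym: "a \<in> underS b \<Longrightarrow> b \<notin> underS a"
  using le_antisym by auto

lemma minim_mem: "A \<noteq> {} \<Longrightarrow> minim A \<in> A"
  using minim_in by simp

lemma minim_le: "a \<in> A \<Longrightarrow> (minim A, a) \<in> r"
  using minim_least by simp

lemma minim_eqI: "a \<in> A \<Longrightarrow> (\<And>b. b \<in> A \<Longrightarrow> (a, b) \<in> r) \<Longrightarrow> minim A = a"
  using equals_minim by simp

definition zero_ord :: 'k where
  "zero_ord = minim UNIV"

lemma zero_ord_le [simp]: "(zero_ord, a) \<in> r"
  unfolding zero_ord_def by (rule minim_le) simp

lemma not_less_zero_ord [simp]: "a \<notin> underS zero_ord"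
  using le_antisym by auto

lemma underS_zero_ord [simp]: "underS zero_ord = {}"
  by (metis equals0I not_less_zero_ord)

lemma supr_upper: "(\<exists>b. \<forall>x\<in>A. (x, b) \<in> r) \<Longrightarrow> a \<in> A \<Longrightarrow> (a, supr A) \<in> r"
  using minim_mem[of "Above A"] by (auto simp: supr_def Above_def)

lemma supr_least: "(\<And>a. a \<in> A \<Longrightarrow> (a, b) \<in> r) \<Longrightarrow> (supr A, b) \<in> r"
  unfolding supr_def by (rule minim_le) (simp add: Above_def)

lemma less_supr_imp: "b \<in> underS (supr A) \<Longrightarrow> \<exists>a\<in>A. b \<in> underS a"
  using supr_least[of A b] not_le_iff_less less_asym by blast

lemma supr_empty: "supr {} = zero_ord"
  by (simp add: supr_def Above_def zero_ord_def)

lemma max2_upper: "(a, max2 a b) \<in> r" "(b, max2 a b) \<in> r"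
  using max2_greater by simp_all

definition small :: "'a set \<Rightarrow> bool" where
  "small X \<longleftrightarrow> ordLess2 (card_of X) r"

lemma r_ordIso_UNIV: "ordIso2 r (card_of (UNIV :: 'k set))"
  using card_of_unique[OF card_order] .

lemma infinite_UNIV: "infinite (UNIV :: 'k set)"
  using uncountable countable_finite by blast

lemma small_underS: "small (underS a)"
  unfolding small_def using card_of_underS[OF Card_order, of a] by simp

lemma small_image: "small X \<Longrightarrow> small (f ` X)"
  unfolding small_def by (metis card_of_image ordLeq_ordLess_trans)

lemma small_Un: "small X \<Longrightarrow> small Y \<Longrightarrow> small (X \<union> Y)"
  unfolding small_def
  using card_of_Un_ordLess_infinite_Field[OF _ Card_order] infinite_UNIV by simp

lemma small_not_UNIV: "small X \<Longrightarrow> \<exists>a :: 'k. a \<notin> X"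
  unfolding small_def
  by (metis UNIV_eq_I ordLess_irreflexive ordLess_ordIso_trans r_ordIso_UNIV)

lemma countable_imp_small: "countable X \<Longrightarrow> small X"
proof (rule ccontr)
  assume "countable X" "\<not> small X"
  then have "ordLeq3 (card_of (UNIV :: 'k set)) (card_of X)"
    unfolding small_def using not_ordLess_iff_ordLeq[OF WELL card_of_Well_order]
    by (metis ordIso_ordLeq_trans ordIso_symmetric r_ordIso_UNIV)
  then obtain g where "inj_on g (UNIV :: 'k set)" "range g \<subseteq> X"
    by (auto simp: card_of_ordLeq[symmetric])
  then show False
    using \<open>countable X\<close> uncountable countable_subset countable_image_inj_on by metis
qed

lemma small_insert: "small X \<Longrightarrow> small (insert a X)"
  using small_Un[of "{a}" X] countable_imp_small[of "{a}"] by simp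

lemma exists_greater: "\<exists>b. a \<in> underS b"
proof -
  obtain b where "b \<notin> insert a (underS a)"
    using small_not_UNIV[OF small_insert[OF small_underS]] by blast
  then show ?thesis
    using le_total[of a b] by auto
qed

definition succ :: "'k \<Rightarrow> 'k" where
  "succ a = suc {a}"

lemma less_succ: "a \<in> underS (succ a)"
proof -
  obtain b where "a \<in> underS b"
    using exists_greater by blast
  then have "AboveS {a} \<noteq> {}"
    by (auto simp: AboveS_def)
  then show ?thesis
    using suc_greater[of "{a}" a] by (auto simp: succ_def)
qed

lemma succ_le: "a \<in> underS b \<Longrightarrow> (succ a, b) \<in> r"
  unfolding succ_def by (rule suc_least_AboveS) (auto simp: AboveS_def)

lemma less_succ_iff: "b \<in> underS (succ a) \<longleftrightarrow> (b, a) \<in> r"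
  using succ_le[of a b] less_succ[of a] le_less_trans not_le_iff_less less_asym by blast

lemma card_le_r_iff: "ordLeq3 (card_of A) r \<longleftrightarrow> ordLeq3 (card_of A) (card_of (UNIV :: 'k set))"
  using r_ordIso_UNIV ordLeq_ordIso_trans ordIso_symmetric by metis

lemma card_le_r_Un: "ordLeq3 (card_of A) r \<Longrightarrow> ordLeq3 (card_of B) r \<Longrightarrow> ordLeq3 (card_of (A \<union> B)) r"
  using card_of_Un_ordLeq_infinite_Field[OF _ _ _ Card_order] infinite_UNIV by simp

lemma card_le_r_insert:
  assumes "ordLeq3 (card_of A) r"
  shows "ordLeq3 (card_of (insert a A)) r"
proof -
  have "ordLeq3 (card_of {a}) r"
    unfolding card_le_r_iff by (rule card_of_singl_ordLeq) simp
  from card_le_r_Un[OF this assms] show ?thesis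
    by simp
qed

section \<open>The \<open>\<kappa>\<close>-Baire property of \<open>\<kappa>\<close>-Borel sets\<close>

lemma basic_nbhd_shrink:
  assumes "(\<alpha>, \<delta>) \<in> r" "x \<in> basic_nbhd r \<alpha> s"
  shows "basic_nbhd r \<delta> x \<subseteq> basic_nbhd r \<alpha> s"
proof
  fix z assume z: "z \<in> basic_nbhd r \<delta> x"
  have "z \<beta> = s \<beta>" if "\<beta> \<in> underS \<alpha>" for \<beta>
    using z assms(2) that less_le_trans[OF that assms(1)] unfolding basic_nbhd_def by simp
  then show "z \<in> basic_nbhd r \<alpha> s"
    by (simp add: basic_nbhd_def)
qed

lemma kk_dense_open_extend:
  assumes "kk_open r D" "kk_dense r D"
  shows "\<exists>\<delta> p'. (\<gamma>, \<delta>) \<in> r \<and> (\<forall>b\<in>underS \<gamma>. p' b = p b) \<and> basic_nbhd r \<delta> p' \<subseteq> D"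
proof -
  obtain x where x: "x \<in> D" "x \<in> basic_nbhd r \<gamma> p"
    using assms(2) unfolding kk_dense_def by blast
  then obtain \<alpha> s where "x \<in> basic_nbhd r \<alpha> s" "basic_nbhd r \<alpha> s \<subseteq> D"
    using assms(1) unfolding kk_open_def by blast
  then have "basic_nbhd r (max2 \<alpha> \<gamma>) x \<subseteq> D"
    using basic_nbhd_shrink[of \<alpha> "max2 \<alpha> \<gamma>"] max2_greater by fastforce
  then show ?thesis
    using x(2) max2_greater[of \<alpha> \<gamma>] by (auto simp: basic_nbhd_def)
qed

lemma kk_baireI:
  assumes "kk_open r U" "ordLeq3 (card_of F) r" "\<And>D. D \<in> F \<Longrightarrow> kk_open r D"
    "\<And>D. D \<in> F \<Longrightarrow> kk_dense r D" "B \<inter> \<Inter>F = U \<inter> \<Inter>F"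
  shows "kk_baire r B"
  unfolding kk_baire_def using assms by (intro exI[of _ U] exI[of _ F]) auto

lemma kk_baire_open: "kk_open r U \<Longrightarrow> kk_baire r U"
  by (rule kk_baireI[where F = "{}"]) (simp_all add: card_le_r_iff card_of_empty)

lemma kk_baire_Compl:
  assumes "kk_baire r B"
  shows "kk_baire r (- B)"
proof -
  obtain U F where UF: "kk_open r U" "ordLeq3 (card_of F) r" "\<forall>D\<in>F. kk_open r D \<and> kk_dense r D"
    "B \<inter> \<Inter>F = U \<inter> \<Inter>F"
    using assms unfolding kk_baire_def by blast
  obtain V where V: "kk_open r V" "U \<inter> V = {}" "kk_dense r (U \<union> V)"
    using kk_open_exterior by blast
  have card: "ordLeq3 (card_of (insert (U \<union> V) F)) r"
    using UF(2) by (rule card_le_r_insert)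
  have "x \<notin> B \<longleftrightarrow> x \<in> V" if "x \<in> \<Inter>(insert (U \<union> V) F)" for x
  proof -
    have "x \<in> B \<longleftrightarrow> x \<in> U"
      using that UF(4) by (metis Int_iff Inter_insert)
    then show ?thesis
      using that V(2) by auto
  qed
  then have eq: "- B \<inter> \<Inter>(insert (U \<union> V) F) = V \<inter> \<Inter>(insert (U \<union> V) F)"
    by auto
  show ?thesis
  proof (rule kk_baireI[OF V(1) card _ _ eq])
    fix D assume "D \<in> insert (U \<union> V) F"
    then show "kk_open r D" "kk_dense r D"
      using kk_open_Un[OF UF(1) V(1)] V(3) UF(3) by auto
  qed
qed

lemma kk_baire_Union:
  assumes "\<forall>B\<in>BB. kk_baire r B" "ordLeq3 (card_of BB) r"
  shows "kk_baire r (\<Union>BB)"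
proof -
  obtain U where "\<forall>B\<in>BB. \<exists>F. kk_open r (U B) \<and> ordLeq3 (card_of F) r \<and>
      (\<forall>D\<in>F. kk_open r D \<and> kk_dense r D) \<and> B \<inter> \<Inter>F = U B \<inter> \<Inter>F"
    using bchoice[OF assms(1)[unfolded kk_baire_def]] by blast
  then obtain F where "\<forall>B\<in>BB. kk_open r (U B) \<and> ordLeq3 (card_of (F B)) r \<and>
      (\<forall>D\<in>F B. kk_open r D \<and> kk_dense r D) \<and> B \<inter> \<Inter>(F B) = U B \<inter> \<Inter>(F B)"
    by (rule bchoice[THEN exE])
  then have UF: "kk_open r (U B)" "ordLeq3 (card_of (F B)) r" "\<forall>D\<in>F B. kk_open r D \<and> kk_dense r D"
    "B \<inter> \<Inter>(F B) = U B \<inter> \<Inter>(F B)" if "B \<in> BB" for B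
    using that by auto
  show ?thesis
  proof (rule kk_baireI)
    show "kk_open r (\<Union>B\<in>BB. U B)"
      using UF(1) by (rule kk_open_UN)
    show "ordLeq3 (card_of (\<Union>B\<in>BB. F B)) r"
      using card_of_UNION_ordLeq_infinite[OF infinite_UNIV, of BB F] assms(2) UF(2)
      by (simp add: card_le_r_iff)
    have "x \<in> B \<longleftrightarrow> x \<in> U B" if "B \<in> BB" "x \<in> \<Inter>(\<Union>B\<in>BB. F B)" for B x
    proof -
      have "x \<in> \<Inter>(F B)"
        using that by blast
      then show ?thesis
        using UF(4)[OF that(1)] by (metis Int_iff)
    qed
    then show "\<Union>BB \<inter> \<Inter>(\<Union>B\<in>BB. F B) = (\<Union>B\<in>BB. U B) \<inter> \<Inter>(\<Union>B\<in>BB. F B)"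
      by auto
  next
    fix D assume "D \<in> (\<Union>B\<in>BB. F B)"
    then obtain B where "B \<in> BB" "D \<in> F B"
      by blast
    then show "kk_open r D" "kk_dense r D"
      using UF(3) by auto
  qed
qed

lemma kappa_borel_imp_kk_baire: "B \<in> kappa_borel r \<Longrightarrow> kk_baire r B"
proof (induction rule: kappa_borel.induct)
  case (kb_open U)
  then show ?case
    by (rule kk_baire_open)
next
  case (kb_compl U)
  show ?case
    by (rule kk_baire_Compl[OF kb_compl.IH])
next
  case (kb_union F)
  then show ?case
    by (intro kk_baire_Union) auto
qed

end

section \<open>Regularity and decoding\<close>

locale kappa_coding = kappa_order r for r :: "'k rel" +
  fixes enc :: "('k \<Rightarrow> 'k) \<Rightarrow> 'k" and z0 z1 :: 'k
  assumes enc_bij: "bij_betw enc (\<Union>\<alpha>. Func (underS \<alpha>) UNIV) UNIV"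
    and z0_neq_z1: "z0 \<noteq> z1"
    and z1_neq_undefined: "z1 \<noteq> undefined"
begin

abbreviation short_seqs :: "('k \<Rightarrow> 'k) set" where
  "short_seqs \<equiv> \<Union>\<alpha>. Func (underS \<alpha>) UNIV"

lemma inj_on_enc: "inj_on enc short_seqs"
  using enc_bij by (rule bij_betw_imp_inj_on)

lemma restrict_underS_short_seqs: "restrict y (underS \<alpha>) \<in> short_seqs"
  by (rule UN_I[of \<alpha>]) (auto simp: Func_def simp del: in_underS_iff)

lemma small_inj_on: "inj_on f A \<Longrightarrow> f ` A \<subseteq> X \<Longrightarrow> small X \<Longrightarrow> small A"
  unfolding small_def by (metis card_of_ordLeq ordLeq_ordLess_trans)

lemma small_imp_bij_underS:
  assumes "small X"
  shows "\<exists>a h. bij_betw h (underS a) X"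
proof -
  obtain a where "ordIso2 (card_of X) (Restr r (underS a))"
    using assms ordLess_iff_ordIso_Restr[OF WELL card_of_Well_order] unfolding small_def by blast
  then obtain g where "iso (card_of X) (Restr r (underS a)) g"
    unfolding ordIso_def by blast
  moreover have "Field (Restr r (underS a)) = underS a"
    using Refl_Field_Restr[OF REFL] by simp
  ultimately have "bij_betw g X (underS a)"
    unfolding iso_def by (simp add: Field_card_of)
  then show ?thesis
    using bij_betw_inv_into by blast
qed

text \<open>\<open>\<kappa>\<^sup><\<^sup>\<kappa> = \<kappa>\<close> makes \<open>\<kappa>\<close> regular: diagonalising against the codes below each
  element of a small set produces a code above all of them.\<close>

lemma small_bounded:
  assumes "small X"
  shows "\<exists>b. \<forall>x\<in>X. (x, b) \<in> r"
proof -
  obtain a h where h: "bij_betw h (underS a) X"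
    using small_imp_bij_underS[OF assms] by blast
  define T where "T i = {t \<in> Func (underS a) UNIV. (enc t, h i) \<in> r}" for i
  have "small (T i)" for i
  proof (rule small_inj_on)
    show "inj_on enc (T i)"
      using inj_on_enc by (rule inj_on_subset) (auto simp: T_def)
    show "enc ` T i \<subseteq> underS (succ (h i))"
      by (auto simp: T_def less_succ_iff simp del: in_underS_iff)
  qed (rule small_underS)
  then have "\<exists>v. v \<notin> (\<lambda>t. t i) ` T i" for i
    by (intro small_not_UNIV small_image)
  then obtain c where c: "\<And>i. c i \<notin> (\<lambda>t. t i) ` T i"
    by metis
  define \<phi> where "\<phi> = restrict c (underS a)"
  have "\<phi> \<in> Func (underS a) UNIV"
    by (simp add: \<phi>_def Func_def)
  have "(h i, enc \<phi>) \<in> r" if "i \<in> underS a" for i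
  proof (rule ccontr)
    assume "(h i, enc \<phi>) \<notin> r"
    then have "\<phi> \<in> T i"
      using \<open>\<phi> \<in> Func (underS a) UNIV\<close> le_total by (auto simp: T_def)
    then show False
      using c[of i] that unfolding \<phi>_def by (metis image_eqI restrict_apply')
  qed
  then show ?thesis
    using h unfolding bij_betw_def by blast
qed

lemma supr_upper_small: "small A \<Longrightarrow> a \<in> A \<Longrightarrow> (a, supr A) \<in> r"
  by (rule supr_upper[OF small_bounded])

lemma supr_range_interleave:
  fixes u v :: "nat \<Rightarrow> 'k"
  assumes "\<And>n. (u n, v n) \<in> r" "\<And>n. (v n, u (Suc n)) \<in> r"
  shows "supr (range u) = supr (range v)"
proof (rule le_antisym)
  have small: "small (range w)" for w :: "nat \<Rightarrow> 'k"
    by (rule countable_imp_small) simp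
  show "(supr (range u), supr (range v)) \<in> r"
  proof (rule supr_least)
    fix a assume "a \<in> range u"
    then show "(a, supr (range v)) \<in> r"
      using le_trans[OF assms(1) supr_upper_small[OF small]] by auto
  qed
  show "(supr (range v), supr (range u)) \<in> r"
  proof (rule supr_least)
    fix a assume "a \<in> range v"
    then show "(a, supr (range u)) \<in> r"
      using le_trans[OF assms(2) supr_upper_small[OF small]] by auto
  qed
qed

lemma wfrec_underS: "wfrec (r - Id) G j = G (restrict (wfrec (r - Id) G) (underS j)) j"
  by (subst wfrec[OF WF]) (simp add: cut_def restrict_def conj_commute)

definition decode :: "'k \<Rightarrow> 'k \<Rightarrow> 'k" where
  "decode c = inv_into short_seqs enc c"

definition decode_len :: "'k \<Rightarrow> 'k" where
  "decode_len c = (SOME \<alpha>. decode c \<in> Func (underS \<alpha>) UNIV)"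

lemma decode_enc: "t \<in> short_seqs \<Longrightarrow> decode (enc t) = t"
  unfolding decode_def using inj_on_enc by (rule inv_into_f_f)

lemma decode_in_Func: "decode c \<in> Func (underS (decode_len c)) UNIV"
proof -
  have "decode c \<in> short_seqs"
    unfolding decode_def using enc_bij by (metis bij_betw_def inv_into_into UNIV_I)
  then show ?thesis
    unfolding decode_len_def by (metis (mono_tags, lifting) UN_E someI_ex)
qed

lemma decode_defined_imp_less: "decode c b \<noteq> undefined \<Longrightarrow> b \<in> underS (decode_len c)"
  using decode_in_Func[of c] unfolding Func_def by (auto simp del: in_underS_iff)

section \<open>Blocks\<close>

text \<open>The image of \<open>y\<close> is written in consecutive blocks, one per \<open>j\<close>: block \<open>j\<close> starts at
  \<open>block_start y j\<close>, and for \<open>j \<noteq> zero_ord\<close> carries the marker \<open>z0\<close> there and the code of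
  \<open>y\<restriction>j\<close> right after it; from \<open>data_start\<close> on it copies the sequence coded by \<open>y j\<close>, and
  the block is long enough to contain all of that sequence.\<close>

definition data_start :: "'k \<Rightarrow> 'k \<Rightarrow> 'k" where
  "data_start j p = (if j = zero_ord then p else succ (succ p))"

definition next_start :: "'k \<Rightarrow> 'k \<Rightarrow> 'k \<Rightarrow> 'k" where
  "next_start c j p = max2 (decode_len c) (succ (data_start j p))"

definition block_start :: "('k \<Rightarrow> 'k) \<Rightarrow> 'k \<Rightarrow> 'k" where
  "block_start y = wfrec (r - Id) (\<lambda>q j. supr ((\<lambda>i. next_start (y i) i (q i)) ` underS j))"

definition block_end :: "('k \<Rightarrow> 'k) \<Rightarrow> 'k \<Rightarrow> 'k" where
  "block_end y j = next_start (y j) j (block_start y j)"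

lemma block_start_eq: "block_start y j = supr (block_end y ` underS j)"
proof -
  have "block_start y j = supr ((\<lambda>i. next_start (y i) i (restrict (block_start y) (underS j) i)) ` underS j)"
    unfolding block_start_def by (rule wfrec_underS)
  also have "\<dots> = supr (block_end y ` underS j)"
    unfolding block_end_def by (intro arg_cong[where f = supr] image_cong refl) (simp add: restrict_apply')
  finally show ?thesis .
qed

lemma block_end_le_block_start: "i \<in> underS j \<Longrightarrow> (block_end y i, block_start y j) \<in> r"
  unfolding block_start_eq[of y j] by (intro supr_upper_small small_image small_underS) simp

lemma le_data_start: "(p, data_start j p) \<in> r"
  using less_trans[OF less_succ less_succ, of p] by (simp add: data_start_def)

lemma data_start_less_block_end: "data_start j (block_start y j) \<in> underS (block_end y j)"
  unfolding block_end_def next_start_def by (rule less_le_trans[OF less_succ]) (simp add: max2_greater)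

lemma decode_len_le_block_end: "(decode_len (y j), block_end y j) \<in> r"
  unfolding block_end_def next_start_def using max2_greater by simp

lemma block_start_less_block_end: "block_start y j \<in> underS (block_end y j)"
  using le_data_start data_start_less_block_end by (rule le_less_trans)

lemma block_start_strict_mono: "i \<in> underS j \<Longrightarrow> block_start y i \<in> underS (block_start y j)"
  using block_start_less_block_end block_end_le_block_start by (rule less_le_trans)

lemma block_start_mono: "(i, j) \<in> r \<Longrightarrow> (block_start y i, block_start y j) \<in> r"
  using block_start_strict_mono[of i j y] by (cases "i = j") auto

lemma block_start_less_imp_less: "block_start y i \<in> underS (block_start y j) \<Longrightarrow> i \<in> underS j"
  using block_start_mono not_le_iff_less less_asym by metis

lemma le_block_start: "(j, block_start y j) \<in> r"
proof (induction j rule: wf_induct[OF WF])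
  case (1 j)
  show ?case
  proof (rule ccontr)
    assume "(j, block_start y j) \<notin> r"
    then have less: "block_start y j \<in> underS j"
      using not_le_iff_less by blast
    then have "(block_start y j, block_start y (block_start y j)) \<in> r"
      using 1 by simp
    then show False
      using block_start_strict_mono[OF less, of y] le_antisym by auto
  qed
qed

lemma block_start_zero_ord: "block_start y zero_ord = zero_ord"
  by (simp add: block_start_eq supr_empty)

lemma block_start_cong:
  assumes "\<forall>i\<in>underS j. y' i = y i" "(i, j) \<in> r"
  shows "block_start y' i = block_start y i"
  using assms(2)
proof (induction i rule: wf_induct[OF WF])
  case (1 i)
  have "block_end y' k = block_end y k" if "k \<in> underS i" for k
  proof -
    have "k \<in> underS j"
      using that 1(2) by (rule less_le_trans)
    then show ?thesis
      using 1(1) that assms(1) by (simp add: block_end_def)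
  qed
  then have "block_end y' ` underS i = block_end y ` underS i"
    by (rule image_cong[OF refl])
  then show ?case
    by (simp only: block_start_eq[of _ i])
qed

lemma block_start_supr_omega:
  fixes s :: "nat \<Rightarrow> 'k"
  assumes inc: "\<And>n. s n \<in> underS (s (Suc n))"
  shows "block_start y (supr (range s)) = supr (range (\<lambda>n. block_start y (s n)))"
proof (rule le_antisym)
  have small: "small (range w)" for w :: "nat \<Rightarrow> 'k"
    by (rule countable_imp_small) simp
  have "(block_end y i, supr (range (\<lambda>n. block_start y (s n)))) \<in> r"
    if i_less: "i \<in> underS (supr (range s))" for i
  proof -
    obtain n where "i \<in> underS (s n)"
      using less_supr_imp[OF i_less] by blast
    then show ?thesis
      by (rule le_trans[OF block_end_le_block_start supr_upper_small[OF small]]) simp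
  qed
  then show "(block_start y (supr (range s)), supr (range (\<lambda>n. block_start y (s n)))) \<in> r"
    unfolding block_start_eq[of y "supr (range s)"] by (auto intro: supr_least)
  have "s n \<in> underS (supr (range s))" for n
    by (rule less_le_trans[OF inc supr_upper_small[OF small]]) simp
  then show "(supr (range (\<lambda>n. block_start y (s n))), block_start y (supr (range s))) \<in> r"
    using block_start_mono by (auto intro!: supr_least)
qed

text \<open>Alternate between the block starts of \<open>y\<close> and of \<open>y'\<close> along an \<open>\<omega>\<close>-sequence; both are
  continuous at its supremum.\<close>

lemma block_start_alternating:
  fixes u :: "nat \<Rightarrow> 'k"
  assumes u_Suc: "\<And>n. u (Suc n) = succ (block_start y' (block_start y (u n)))"
  shows "block_start y (supr (range u)) = block_start y' (supr (range (\<lambda>n. block_start y (u n))))"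
proof -
  define u' where "u' n = block_start y (u n)" for n
  have u_inc: "u n \<in> underS (u (Suc n))" for n
    unfolding u_Suc using le_trans[OF le_block_start le_block_start] less_succ
    by (rule le_less_trans)
  have u'_inc: "u' n \<in> underS (u' (Suc n))" for n
    unfolding u'_def by (rule block_start_strict_mono[OF u_inc])
  have "block_start y (supr (range u)) = supr (range u')"
    unfolding u'_def by (rule block_start_supr_omega[where s = u, OF u_inc])
  also have "\<dots> = supr (range (\<lambda>n. block_start y' (u' n)))"
  proof (rule supr_range_interleave)
    show "(u' n, block_start y' (u' n)) \<in> r" for n
      by (rule le_block_start)
    show "(block_start y' (u' n), u' (Suc n)) \<in> r" for n
      using less_le_trans[OF less_succ le_block_start, of "block_start y' (u' n)" y]
      unfolding u'_def u_Suc by simp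
  qed
  also have "\<dots> = block_start y' (supr (range u'))"
    by (rule block_start_supr_omega[where s = u', OF u'_inc, symmetric])
  finally show ?thesis
    unfolding u'_def .
qed

lemma common_block_start:
  "\<exists>J J'. J \<noteq> zero_ord \<and> J' \<noteq> zero_ord \<and> block_start y J = block_start y' J' \<and>
    b \<in> underS (block_start y J)"
proof -
  define u where "u = rec_nat (succ b) (\<lambda>_ i. succ (block_start y' (block_start y i)))"
  define J where "J = supr (range u)"
  define J' where "J' = supr (range (\<lambda>n. block_start y (u n)))"
  have eq: "block_start y J = block_start y' J'"
    unfolding J_def J'_def by (rule block_start_alternating) (simp add: u_def)
  have "b \<in> underS (u 0)"
    using less_succ[of b] by (simp add: u_def)
  moreover have "(u 0, J) \<in> r"
    unfolding J_def by (rule supr_upper_small) (simp_all add: countable_imp_small)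
  then have "(u 0, block_start y J) \<in> r"
    by (rule le_trans[OF le_block_start block_start_mono])
  ultimately have b: "b \<in> underS (block_start y J)"
    by (rule less_le_trans)
  have "J \<noteq> zero_ord" "J' \<noteq> zero_ord"
    using b eq not_less_zero_ord block_start_zero_ord by metis+
  with eq b show ?thesis
    by blast
qed

section \<open>The embedding\<close>

definition block_of :: "('k \<Rightarrow> 'k) \<Rightarrow> 'k \<Rightarrow> 'k" where
  "block_of y b = minim {j. b \<in> underS (block_end y j)}"

lemma less_block_end_block_of: "b \<in> underS (block_end y (block_of y b))"
proof -
  have "b \<in> underS (block_end y b)"
    using le_block_start block_start_less_block_end by (rule le_less_trans)
  then show ?thesis
    unfolding block_of_def using minim_mem[of "{j. b \<in> underS (block_end y j)}"] by blast
qed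

lemma block_start_block_of_le: "(block_start y (block_of y b), b) \<in> r"
  unfolding block_start_eq[of y "block_of y b"]
proof (rule supr_least)
  fix e assume "e \<in> block_end y ` underS (block_of y b)"
  then obtain i where i: "i \<in> underS (block_of y b)" "e = block_end y i"
    by blast
  show "(e, b) \<in> r"
  proof (rule ccontr)
    assume "(e, b) \<notin> r"
    then have "(block_of y b, i) \<in> r"
      unfolding block_of_def using i(2) not_le_iff_less by (intro minim_le) simp
    then show False
      using i(1) less_asym not_le_iff_less by blast
  qed
qed

lemma block_of_eqI:
  assumes "(block_start y j, b) \<in> r" "b \<in> underS (block_end y j)"
  shows "block_of y b = j"
  unfolding block_of_def
proof (rule minim_eqI)
  show "j \<in> {j. b \<in> underS (block_end y j)}"
    using assms(2) by simp
  fix j' assume j': "j' \<in> {j. b \<in> underS (block_end y j)}"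
  show "(j, j') \<in> r"
  proof (rule ccontr)
    assume "(j, j') \<notin> r"
    then have "(block_end y j', b) \<in> r"
      using le_trans[OF block_end_le_block_start assms(1)] not_le_iff_less by blast
    then show False
      using j' le_antisym by auto
  qed
qed

definition emb :: "('k \<Rightarrow> 'k) \<Rightarrow> 'k \<Rightarrow> 'k" where
  "emb y b = (let j = block_of y b in
     if j \<noteq> zero_ord \<and> b = block_start y j then z0
     else if j \<noteq> zero_ord \<and> b = succ (block_start y j) then enc (restrict y (underS j))
     else decode (y j) b)"

lemma emb_block_start: "j \<noteq> zero_ord \<Longrightarrow> emb y (block_start y j) = z0"
  using block_of_eqI[OF le_refl block_start_less_block_end] by (simp add: emb_def)

lemma emb_code:
  assumes "j \<noteq> zero_ord"
  shows "emb y (succ (block_start y j)) = enc (restrict y (underS j))"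
proof -
  have "data_start j (block_start y j) = succ (succ (block_start y j))"
    using assms by (simp add: data_start_def)
  then have "succ (block_start y j) \<in> underS (block_end y j)"
    by (metis data_start_less_block_end less_succ less_trans)
  then have "block_of y (succ (block_start y j)) = j"
    using less_succ by (intro block_of_eqI) simp_all
  moreover have "succ (block_start y j) \<noteq> block_start y j"
    using less_succ[of "block_start y j"] by auto
  ultimately show ?thesis
    using assms by (simp add: emb_def)
qed

lemma emb_data:
  assumes "(data_start j (block_start y j), b) \<in> r" "b \<in> underS (block_end y j)"
  shows "emb y b = decode (y j) b"
proof -
  have "block_of y b = j"
    using block_of_eqI le_trans[OF le_data_start assms(1)] assms(2) by blast
  moreover have "b \<noteq> block_start y j \<and> b \<noteq> succ (block_start y j)" if "j \<noteq> zero_ord"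
  proof -
    have "(succ (succ (block_start y j)), b) \<in> r"
      using assms(1) that by (simp add: data_start_def)
    then have "succ (block_start y j) \<in> underS b"
      by (rule less_le_trans[OF less_succ])
    moreover from this have "block_start y j \<in> underS b"
      by (rule less_trans[OF less_succ])
    ultimately show ?thesis
      by auto
  qed
  ultimately show ?thesis
    by (auto simp: emb_def)
qed

lemma emb_cong:
  assumes agree: "\<forall>i\<in>underS j. y' i = y i" and b: "b \<in> underS (block_start y j)"
  shows "emb y' b = emb y b"
proof -
  define k where "k = block_of y b"
  have "k \<in> underS j"
    using le_less_trans[OF block_start_block_of_le b] unfolding k_def
    by (rule block_start_less_imp_less)
  then have start: "block_start y' k = block_start y k" and "y' k = y k"
    using block_start_cong[OF agree] agree by simp_all
  then have "block_end y' k = block_end y k"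
    by (simp add: block_end_def)
  then have "block_of y' b = k"
    using block_of_eqI block_start_block_of_le less_block_end_block_of start
    unfolding k_def by metis
  moreover have "restrict y' (underS k) = restrict y (underS k)"
    using agree less_trans[OF _ \<open>k \<in> underS j\<close>] by (auto simp: restrict_def simp del: in_underS_iff)
  ultimately show ?thesis
    unfolding emb_def Let_def k_def[symmetric] by (simp only: start \<open>y' k = y k\<close>)
qed

lemma emb_cong_data_start:
  assumes agree: "\<forall>i\<in>underS j. y' i = y i" and b: "b \<in> underS (data_start j (block_start y j))"
  shows "emb y' b = emb y b"
proof -
  have start: "block_start y' j = block_start y j"
    using block_start_cong[OF agree] by simp
  consider "b \<in> underS (block_start y j)" | "j \<noteq> zero_ord" "b = block_start y j"
    | "j \<noteq> zero_ord" "b = succ (block_start y j)"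
  proof (cases "j = zero_ord")
    case True
    then show ?thesis
      using b that(1) by (simp add: data_start_def)
  next
    case False
    then have "(b, succ (block_start y j)) \<in> r"
      using b less_succ_iff[of b "succ (block_start y j)"] by (simp add: data_start_def)
    then have "b = succ (block_start y j) \<or> (b, block_start y j) \<in> r"
      using less_succ_iff[of b "block_start y j"] by auto
    then show ?thesis
      using False that by auto
  qed
  then show ?thesis
  proof cases
    case 1
    with agree show ?thesis
      by (rule emb_cong)
  next
    case 2
    then show ?thesis
      using emb_block_start start by metis
  next
    case 3
    moreover have "restrict y' (underS j) = restrict y (underS j)"
      using agree by (auto simp: restrict_def simp del: in_underS_iff)
    ultimately show ?thesis
      using emb_code start by metis
  qed
qed

lemma kk_continuous_emb: "kk_continuous r emb"
  unfolding kk_continuous_def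
proof (intro allI impI kk_openI)
  fix U y assume "kk_open r U" "y \<in> emb -` U"
  then obtain \<alpha> s where \<alpha>s: "emb y \<in> basic_nbhd r \<alpha> s" "basic_nbhd r \<alpha> s \<subseteq> U"
    unfolding kk_open_def by blast
  have "emb y' \<in> basic_nbhd r \<alpha> s" if "y' \<in> basic_nbhd r \<alpha> y" for y'
  proof -
    have "emb y' b = emb y b" if "b \<in> underS \<alpha>" for b
      using \<open>y' \<in> basic_nbhd r \<alpha> y\<close> less_le_trans[OF that le_block_start]
      unfolding basic_nbhd_def by (intro emb_cong) auto
    then show ?thesis
      using \<alpha>s(1) by (simp add: basic_nbhd_def)
  qed
  then have "basic_nbhd r \<alpha> y \<subseteq> emb -` U"
    using \<alpha>s(2) by auto
  then show "\<exists>\<alpha> s. y \<in> basic_nbhd r \<alpha> s \<and> basic_nbhd r \<alpha> s \<subseteq> emb -` U"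
    by (intro exI[of _ \<alpha>] exI[of _ y]) simp
qed

text \<open>At a common block start both images carry the code of an initial segment of the argument,
  and initial segments reach beyond any given \<open>i\<close>.\<close>

lemma inj_emb: "inj emb"
proof (rule injI, rule ext)
  fix y y' i assume eq: "emb y = emb y'"
  obtain J J' where J: "J \<noteq> zero_ord" "J' \<noteq> zero_ord" "block_start y J = block_start y' J'"
    "max2 (block_start y i) (block_start y' i) \<in> underS (block_start y J)"
    using common_block_start by blast
  have "i \<in> underS J"
    using le_less_trans[OF max2_upper(1) J(4)] by (rule block_start_less_imp_less)
  moreover have "i \<in> underS J'"
    using le_less_trans[OF max2_upper(2) J(4)] unfolding J(3)
    by (rule block_start_less_imp_less)
  moreover have "enc (restrict y (underS J)) = enc (restrict y' (underS J'))"
    using emb_code[OF J(1), of y] emb_code[OF J(2), of y'] eq J(3) by simp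
  then have "restrict y (underS J) = restrict y' (underS J')"
    using inj_on_enc restrict_underS_short_seqs by (meson inj_onD)
  ultimately show "y i = y' i"
    by (metis restrict_apply')
qed

definition flip :: "'k \<Rightarrow> ('k \<Rightarrow> 'k) \<Rightarrow> 'k \<Rightarrow> 'k" where
  "flip a = coordwise (\<lambda>b. if b \<in> underS a then id else transpose z0 z1)"

lemma emb_neq_flip_emb: "emb y' \<noteq> flip a (emb y)"
proof
  assume eq: "emb y' = flip a (emb y)"
  obtain J J' where J: "J \<noteq> zero_ord" "J' \<noteq> zero_ord" "block_start y J = block_start y' J'"
    "a \<in> underS (block_start y J)"
    using common_block_start by blast
  have "emb y' (block_start y J) = z0" "emb y (block_start y J) = z0"
    using emb_block_start[OF J(2), of y'] emb_block_start[OF J(1), of y] J(3) by simp_all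
  moreover have "block_start y J \<notin> underS a"
    using J(4) less_asym by blast
  ultimately show False
    using eq z0_neq_z1 by (simp add: flip_def coordwise_def fun_eq_iff del: in_underS_iff)
qed

text \<open>The code of \<open>p\<close> below \<open>\<delta>\<close>; the tag \<open>z1 \<noteq> undefined\<close> at \<open>\<delta>\<close> forces the decoded length
  beyond \<open>\<delta>\<close>.\<close>

definition tagged :: "'k \<Rightarrow> ('k \<Rightarrow> 'k) \<Rightarrow> 'k \<Rightarrow> 'k" where
  "tagged \<delta> p = restrict (p(\<delta> := z1)) (underS (succ \<delta>))"

lemma emb_eq_tagged:
  assumes code: "y j = enc (tagged \<delta> p)"
    and b: "(data_start j (block_start y j), b) \<in> r" "b \<in> underS \<delta>"
  shows "emb y b = p b"
proof -
  have dec: "decode (y j) = tagged \<delta> p"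
    unfolding code tagged_def by (rule decode_enc[OF restrict_underS_short_seqs])
  then have "decode (y j) \<delta> \<noteq> undefined"
    using less_succ[of \<delta>] z1_neq_undefined by (simp add: tagged_def)
  then have "\<delta> \<in> underS (block_end y j)"
    by (rule less_le_trans[OF decode_defined_imp_less decode_len_le_block_end])
  then have "emb y b = decode (y j) b"
    using b by (intro emb_data less_trans[OF b(2)])
  then show ?thesis
    using b(2) less_trans[OF b(2) less_succ] by (simp add: dec tagged_def)
qed

lemma emb_in_basic_nbhd_tagged:
  assumes "y j = enc (tagged \<delta> p)"
    and "\<forall>b\<in>underS (data_start j (block_start y j)). p b = emb y b"
  shows "emb y \<in> basic_nbhd r \<delta> p"
  unfolding basic_nbhd_def
proof (intro CollectI ballI)
  fix b assume "b \<in> underS \<delta>"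
  show "emb y b = p b"
  proof (cases "b \<in> underS (data_start j (block_start y j))")
    case True
    then show ?thesis
      using assms(2) by simp
  next
    case False
    then have "(data_start j (block_start y j), b) \<in> r"
      using not_le_iff_less by blast
    with assms(1) show ?thesis
      using \<open>b \<in> underS \<delta>\<close> by (rule emb_eq_tagged)
  qed
qed

text \<open>Since \<open>emb y\<close> below \<open>data_start j (block_start y j)\<close> depends only on \<open>y\<restriction>j\<close>, a
  transfinite recursion can let \<open>y j\<close> code any extension of that part of the image.\<close>

lemma emb_wfrec_in_basic_nbhd:
  fixes ext :: "('k \<Rightarrow> 'k) \<Rightarrow> 'k \<Rightarrow> 'k \<times> ('k \<Rightarrow> 'k)"
  assumes extends: "\<And>y' j. j \<noteq> zero_ord \<Longrightarrow>
      \<forall>b\<in>underS (data_start j (block_start y' j)). snd (ext y' j) b = emb y' b"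
    and y: "y = wfrec (r - Id) (\<lambda>y' j. enc (tagged (fst (ext y' j)) (snd (ext y' j))))"
  shows "emb y \<in> basic_nbhd r (fst (ext (restrict y (underS j)) j)) (snd (ext (restrict y (underS j)) j))"
proof (rule emb_in_basic_nbhd_tagged)
  let ?y' = "restrict y (underS j)"
  show "y j = enc (tagged (fst (ext ?y' j)) (snd (ext ?y' j)))"
    unfolding y by (rule wfrec_underS)
  have agree: "\<forall>i\<in>underS j. ?y' i = y i"
    by simp
  show "\<forall>b\<in>underS (data_start j (block_start y j)). snd (ext ?y' j) b = emb y b"
  proof (cases "j = zero_ord")
    case True
    then show ?thesis
      by (simp add: data_start_def block_start_zero_ord)
  next
    case False
    then show ?thesis
      using extends[of j ?y'] emb_cong_data_start[OF agree] block_start_cong[OF agree le_refl]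
      by simp
  qed
qed

lemma emb_meets_dense_sequence:
  fixes D :: "'k \<Rightarrow> ('k \<Rightarrow> 'k) set"
  assumes D: "\<And>j. kk_open r (D j)" "\<And>j. kk_dense r (D j)"
  shows "\<exists>y. emb y \<in> basic_nbhd r \<alpha> s \<and> (\<forall>j. emb y \<in> D j)"
proof -
  define known where "known y' j =
    (if j = zero_ord then (\<alpha>, s) else (data_start j (block_start y' j), emb y'))" for y' j
  define good_ext where "good_ext y' j e \<longleftrightarrow> (fst (known y' j), fst e) \<in> r \<and>
    (\<forall>b\<in>underS (fst (known y' j)). snd e b = snd (known y' j) b) \<and> basic_nbhd r (fst e) (snd e) \<subseteq> D j"
    for y' j e
  define ext where "ext y' j = (SOME e. good_ext y' j e)" for y' j
  have "\<exists>e. good_ext y' j e" for y' j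
    unfolding good_ext_def split_paired_Ex fst_conv snd_conv by (rule kk_dense_open_extend[OF D])
  then have ext: "good_ext y' j (ext y' j)" for y' j
    unfolding ext_def by (rule someI_ex)
  define y where "y = wfrec (r - Id) (\<lambda>y' j. enc (tagged (fst (ext y' j)) (snd (ext y' j))))"
  have in_ext: "emb y \<in> basic_nbhd r (fst (ext (restrict y (underS j)) j)) (snd (ext (restrict y (underS j)) j))"
    for j
    using ext y_def by (intro emb_wfrec_in_basic_nbhd) (simp_all add: good_ext_def known_def)
  have "emb y \<in> D j" for j
    using in_ext[of j] ext[of "restrict y (underS j)" j] unfolding good_ext_def by (meson subsetD)
  moreover have "emb y \<in> basic_nbhd r \<alpha> s"
  proof -
    let ?e = "ext (restrict y (underS zero_ord)) zero_ord"
    have "(\<alpha>, fst ?e) \<in> r" "snd ?e \<in> basic_nbhd r \<alpha> s"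
      using ext[of "restrict y (underS zero_ord)" zero_ord]
      by (simp_all add: good_ext_def known_def basic_nbhd_def)
    then show ?thesis
      using in_ext[of zero_ord] basic_nbhd_shrink by (meson subsetD)
  qed
  ultimately show ?thesis
    by blast
qed

lemma emb_meets_comeager:
  assumes "ordLeq3 (card_of F) r" "\<forall>D\<in>F. kk_open r D \<and> kk_dense r D"
  shows "\<exists>y. emb y \<in> basic_nbhd r \<alpha> s \<and> emb y \<in> \<Inter>F"
proof -
  have "ordLeq3 (card_of (insert UNIV F)) (card_of (UNIV :: 'k set))"
    unfolding card_le_r_iff[symmetric] by (rule card_le_r_insert[OF assms(1)])
  then have "\<exists>D :: 'k \<Rightarrow> ('k \<Rightarrow> 'k) set. range D = insert UNIV F"
    by (subst card_of_ordLeq2) simp_all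
  then obtain D :: "'k \<Rightarrow> ('k \<Rightarrow> 'k) set" where D: "range D = insert UNIV F"
    by blast
  have "kk_open r (D j)" "kk_dense r (D j)" for j
    using D assms(2) kk_open_UNIV kk_dense_UNIV rangeI[of D j] by auto
  then obtain y where "emb y \<in> basic_nbhd r \<alpha> s" "\<forall>j. emb y \<in> D j"
    using emb_meets_dense_sequence by blast
  then show ?thesis
    using D by blast
qed

theorem range_emb_not_kappa_borel: "range emb \<notin> kappa_borel r"
proof
  assume "range emb \<in> kappa_borel r"
  then obtain U F where UF: "kk_open r U" "ordLeq3 (card_of F) r" "\<forall>D\<in>F. kk_open r D \<and> kk_dense r D"
    "range emb \<inter> \<Inter>F = U \<inter> \<Inter>F"
    using kappa_borel_imp_kk_baire unfolding kk_baire_def by blast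
  show False
  proof (cases "U = {}")
    case True
    obtain y where "emb y \<in> \<Inter>F"
      using emb_meets_comeager[OF UF(2,3)] by blast
    then show False
      using UF(4) True by blast
  next
    case False
    then obtain x where "x \<in> U"
      by blast
    then obtain a s where as: "basic_nbhd r a s \<subseteq> U"
      using UF(1) unfolding kk_open_def by blast
    define F' where "F' = F \<union> (\<lambda>D. flip a -` D) ` F"
    have "ordLeq3 (card_of F') r"
      unfolding F'_def by (rule card_le_r_Un[OF UF(2) ordLeq_transitive[OF card_of_image UF(2)]])
    moreover have "\<forall>D\<in>F'. kk_open r D \<and> kk_dense r D"
      unfolding F'_def flip_def using UF(3)
      by (auto intro!: kk_open_vimage_coordwise kk_dense_vimage_coordwise)
    ultimately obtain y where y: "emb y \<in> basic_nbhd r a s" "emb y \<in> \<Inter>F'"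
      using emb_meets_comeager by blast
    have "flip a (emb y) \<in> basic_nbhd r a s"
      unfolding flip_def by (rule coordwise_in_basic_nbhd[OF _ y(1)]) simp
    then have "flip a (emb y) \<in> U \<inter> \<Inter>F"
      using as y(2) unfolding F'_def by auto
    then obtain y' where "emb y' = flip a (emb y)"
      using UF(4) by (metis IntD1 IntI rangeE)
    then show False
      using emb_neq_flip_emb by blast
  qed
qed

end

theorem corollary1p9:
  fixes r :: "'k rel"
  assumes "card_order r"
    and "\<not> countable (UNIV :: 'k set)"
    and "ordIso2 (card_of (\<Union>\<alpha>. Func (underS r \<alpha>) (UNIV :: 'k set))) r"
  shows "\<exists>f :: ('k \<Rightarrow> 'k) \<Rightarrow> ('k \<Rightarrow> 'k).
           kk_continuous r f \<and> inj f \<and> range f \<notin> kappa_borel r"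
proof -
  have "ordIso2 (card_of (\<Union>\<alpha>. Func (underS r \<alpha>) (UNIV :: 'k set))) (card_of (UNIV :: 'k set))"
    using assms(3) card_of_unique[OF assms(1)] by (rule ordIso_transitive)
  then obtain enc :: "('k \<Rightarrow> 'k) \<Rightarrow> 'k"
    where "bij_betw enc (\<Union>\<alpha>. Func (underS r \<alpha>) UNIV) UNIV"
    using card_of_ordIso by blast
  moreover have "UNIV \<noteq> {undefined :: 'k}"
  proof
    assume "UNIV = {undefined :: 'k}"
    then have "countable (UNIV :: 'k set)"
      by (metis countable_finite finite.emptyI finite.insertI)
    with assms(2) show False ..
  qed
  then obtain z1 :: 'k where "z1 \<noteq> undefined"
    by blast
  ultimately interpret kappa_coding r enc undefined z1
    using assms(1,2) by unfold_locales auto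
  show ?thesis
    using kk_continuous_emb inj_emb range_emb_not_kappa_borel by blast
qed

end
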